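(* For a reaction network $(X,\mathscr{R})$, the binary relation $\rightleftharpoons$ on $X$ is an equivalence relation.
   Context: A reaction network (RN) $(X,\mathscr{R})$ consists of a finite non-empty set $X$ of species and a finite non-empty set $\mathscr{R}$ of reactions. Each reaction $r$ is given by stoichiometric coefficients $s^-_{xr},s^+_{xr}\in\mathbb{N}_0$. The stoichiometric matrix $S\in\mathbb{Z}^{X\times\mathscr{R}}$ has entries $S_{xr}=s^+_{xr}-s^-_{xr}$. The paper assumes throughout that RNs are closed: every reaction $r$ has $x,y$ with $S_{xr}<0<S_{yr}$. Distinct $x,y\in X$ are obligatory isomers if there is $v\in\mathbb{Z}^{\mathscr{R}}$ with: - $-[Sv]_x=[Sv]_y=k$ for some positive integer $k$; - $[Sv]_z=0$ for all $z\in X\setminus\{x,y\}$. Write $x\rightleftharpoons y$ if $x=y$ or $x$ and $y$ are obligatory isomers. *)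

theory Defs
  imports Main
begin

text \<open>A reaction network with species set X and reaction set R, given by
stoichiometric coefficients sm (reactant side, s^-) and sp (product side, s^+).\<close>

definition stoich :: "('x \<Rightarrow> 'r \<Rightarrow> nat) \<Rightarrow> ('x \<Rightarrow> 'r \<Rightarrow> nat) \<Rightarrow> 'x \<Rightarrow> 'r \<Rightarrow> int" where
  "stoich sm sp x r = int (sp x r) - int (sm x r)"

definition reaction_network :: "'x set \<Rightarrow> 'r set \<Rightarrow> bool" where
  "reaction_network X R \<longleftrightarrow> finite X \<and> X \<noteq> {} \<and> finite R \<and> R \<noteq> {}"

definition closed_RN :: "'x set \<Rightarrow> 'r set \<Rightarrow> ('x \<Rightarrow> 'r \<Rightarrow> nat) \<Rightarrow> ('x \<Rightarrow> 'r \<Rightarrow> nat) \<Rightarrow> bool" where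
  "closed_RN X R sm sp \<longleftrightarrow>
     (\<forall>r\<in>R. \<exists>x\<in>X. \<exists>y\<in>X. stoich sm sp x r < 0 \<and> 0 < stoich sm sp y r)"

definition Smul :: "'r set \<Rightarrow> ('x \<Rightarrow> 'r \<Rightarrow> nat) \<Rightarrow> ('x \<Rightarrow> 'r \<Rightarrow> nat) \<Rightarrow> ('r \<Rightarrow> int) \<Rightarrow> 'x \<Rightarrow> int" where
  "Smul R sm sp v x = (\<Sum>r\<in>R. stoich sm sp x r * v r)"

definition obligatory_isomers :: "'x set \<Rightarrow> 'r set \<Rightarrow> ('x \<Rightarrow> 'r \<Rightarrow> nat) \<Rightarrow> ('x \<Rightarrow> 'r \<Rightarrow> nat) \<Rightarrow> 'x \<Rightarrow> 'x \<Rightarrow> bool" where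
  "obligatory_isomers X R sm sp x y \<longleftrightarrow> x \<in> X \<and> y \<in> X \<and> x \<noteq> y \<and>
     (\<exists>v :: 'r \<Rightarrow> int. \<exists>k :: int. k > 0 \<and>
        - Smul R sm sp v x = k \<and> Smul R sm sp v y = k \<and>
        (\<forall>z\<in>X - {x, y}. Smul R sm sp v z = 0))"

definition iso_rel :: "'x set \<Rightarrow> 'r set \<Rightarrow> ('x \<Rightarrow> 'r \<Rightarrow> nat) \<Rightarrow> ('x \<Rightarrow> 'r \<Rightarrow> nat) \<Rightarrow> ('x \<times> 'x) set" where
  "iso_rel X R sm sp = {(x, y). x \<in> X \<and> y \<in> X \<and> (x = y \<or> obligatory_isomers X R sm sp x y)}"

end

theory Submission
  imports Defs
begin

text \<open>Reversing a witness \<open>v\<close> swaps the roles of \<open>x\<close> and \<open>y\<close>, which gives symmetry.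
  For transitivity, if \<open>v\<close> converts \<open>k\<close> units of \<open>x\<close> into \<open>y\<close> and \<open>w\<close> converts \<open>l\<close> units
  of \<open>y\<close> into \<open>z\<close>, then \<open>l v + k w\<close> converts \<open>k l\<close> units of \<open>x\<close> into \<open>z\<close>: the
  intermediate species \<open>y\<close> cancels.\<close>

lemma Smul_lincomb:
  "Smul R sm sp (\<lambda>r. a * v r + b * w r) x = a * Smul R sm sp v x + b * Smul R sm sp w x"
  unfolding Smul_def by (simp add: algebra_simps sum.distrib sum_distrib_left)

lemma Smul_uminus: "Smul R sm sp (\<lambda>r. - v r) x = - Smul R sm sp v x"
  unfolding Smul_def by (simp add: sum_negf)

lemma obligatory_isomers_sym:
  assumes "obligatory_isomers X R sm sp x y"
  shows "obligatory_isomers X R sm sp y x"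
proof -
  obtain v k where "x \<in> X" "y \<in> X" "x \<noteq> y" "0 < k"
      "Smul R sm sp v x = - k" "Smul R sm sp v y = k"
      "\<forall>t\<in>X - {x, y}. Smul R sm sp v t = 0"
    using assms unfolding obligatory_isomers_def by force
  then show ?thesis
    unfolding obligatory_isomers_def
    by (intro conjI exI[of _ "\<lambda>r. - v r"] exI[of _ k]) (auto simp: Smul_uminus)
qed

lemma obligatory_isomers_trans:
  assumes xy: "obligatory_isomers X R sm sp x y"
    and yz: "obligatory_isomers X R sm sp y z"
    and "x \<noteq> z"
  shows "obligatory_isomers X R sm sp x z"
proof -
  obtain v k where v: "x \<in> X" "y \<in> X" "x \<noteq> y" "0 < k"
      "Smul R sm sp v x = - k" "Smul R sm sp v y = k"
      "\<forall>t\<in>X - {x, y}. Smul R sm sp v t = 0"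
    using xy unfolding obligatory_isomers_def by force
  obtain w l where w: "z \<in> X" "y \<noteq> z" "0 < l"
      "Smul R sm sp w y = - l" "Smul R sm sp w z = l"
      "\<forall>t\<in>X - {y, z}. Smul R sm sp w t = 0"
    using yz unfolding obligatory_isomers_def by force
  define u where "u = (\<lambda>r. l * v r + k * w r)"
  have "Smul R sm sp u x = - (k * l)"
    using v w \<open>x \<noteq> z\<close> by (simp add: u_def Smul_lincomb)
  moreover have "Smul R sm sp u z = k * l"
    using v w \<open>x \<noteq> z\<close> by (simp add: u_def Smul_lincomb)
  moreover have "Smul R sm sp u t = 0" if "t \<in> X - {x, z}" for t
  proof (cases "t = y")
    case True
    then show ?thesis using v w by (simp add: u_def Smul_lincomb)
  next
    case False
    then show ?thesis using v w that by (simp add: u_def Smul_lincomb)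
  qed
  ultimately show ?thesis
    unfolding obligatory_isomers_def
    using v w \<open>x \<noteq> z\<close> by (intro conjI exI[of _ u] exI[of _ "k * l"]) auto
qed

theorem proposition9:
  fixes X :: "'x set" and R :: "'r set" and sm sp :: "'x \<Rightarrow> 'r \<Rightarrow> nat"
  assumes "reaction_network X R"
    and "closed_RN X R sm sp"
  shows "equiv X (iso_rel X R sm sp)"
proof (rule equivI)
  show "iso_rel X R sm sp \<subseteq> X \<times> X"
    unfolding iso_rel_def by auto
  show "refl_on X (iso_rel X R sm sp)"
    unfolding refl_on_def iso_rel_def by auto
  show "sym (iso_rel X R sm sp)"
    unfolding sym_def iso_rel_def by (auto intro: obligatory_isomers_sym)
  show "trans (iso_rel X R sm sp)"
    unfolding trans_def iso_rel_def by (auto intro: obligatory_isomers_trans)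
qed

end
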